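(* Let $(\mathcal A,d)$ be a DGA and let $a,b_1,\dots,b_n\in\mathcal A$ be closed elements such that the degree $|a|$ is even and $a\wedge b_i$ is exact for all $i$. Let $\xi_i$ be any elements with $d\xi_i=a\wedge b_i$. Then $$c=\sum_{i=1}^n \overline{\xi_1}\wedge\cdots\wedge\overline{\xi_{i-1}}\wedge b_i\wedge\xi_{i+1}\wedge\cdots\wedge\xi_n$$ is closed, where $\overline{\xi}=(-1)^{|\xi|}\xi$.
   Context: A DGA is a graded-commutative differential graded algebra over $\mathbb R$ with differential of degree $+1$ satisfying the graded Leibniz rule; $|x|$ denotes the degree of $x$. *)

theory Defs
  imports Main "HOL.Real_Vector_Spaces"
begin

definition is_DGA :: "(int \<Rightarrow> 'a::real_algebra_1 set) \<Rightarrow> ('a \<Rightarrow> 'a) \<Rightarrow> bool" where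
  "is_DGA G d \<longleftrightarrow>
     (\<forall>k. 0 \<in> G k) \<and>
     (\<forall>k x y. x \<in> G k \<longrightarrow> y \<in> G k \<longrightarrow> x + y \<in> G k) \<and>
     (\<forall>k r x. x \<in> G k \<longrightarrow> r *\<^sub>R x \<in> G k) \<and>
     (\<forall>x. \<exists>S f. finite S \<and> (\<forall>k\<in>S. f k \<in> G k) \<and> x = sum f S) \<and>
     (\<forall>S f. finite S \<longrightarrow> (\<forall>k\<in>S. f k \<in> G k) \<longrightarrow> sum f S = 0 \<longrightarrow> (\<forall>k\<in>S. f k = 0)) \<and>
     1 \<in> G 0 \<and>
     (\<forall>i j x y. x \<in> G i \<longrightarrow> y \<in> G j \<longrightarrow> x * y \<in> G (i + j)) \<and>
     (\<forall>i j x y. x \<in> G i \<longrightarrow> y \<in> G j \<longrightarrow> x * y = ((-1::real) powi (i * j)) *\<^sub>R (y * x)) \<and>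
     (\<forall>x y. d (x + y) = d x + d y) \<and>
     (\<forall>r x. d (r *\<^sub>R x) = r *\<^sub>R d x) \<and>
     (\<forall>k x. x \<in> G k \<longrightarrow> d x \<in> G (k + 1)) \<and>
     (\<forall>x. d (d x) = 0) \<and>
     (\<forall>i x y. x \<in> G i \<longrightarrow> d (x * y) = d x * y + ((-1::real) powi i) *\<^sub>R (x * d y))"

definition dga_bar :: "int \<Rightarrow> 'a::real_vector \<Rightarrow> 'a" where
  "dga_bar k x = ((-1::real) powi k) *\<^sub>R x"

end

theory Submission
  imports Defs
begin

text \<open>Write \<open>c\<^sub>m\<close> for the sum in the theorem with \<open>n\<close> replaced by \<open>m\<close>, so that
  \<open>c\<^sub>m\<^sub>+\<^sub>1 = c\<^sub>m \<xi>\<^sub>m\<^sub>+\<^sub>1 + \<xi>\<^sub>1\<^sub>\<dots>\<^sub>m b\<^sub>m\<^sub>+\<^sub>1\<close> with \<open>\<xi>\<^sub>1\<^sub>\<dots>\<^sub>m\<close> the product of the barred \<open>\<xi>\<^sub>j\<close>, and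
  show \<open>d c\<^sub>m = 0\<close> by induction on \<open>m\<close>. Assuming \<open>d c\<^sub>m = 0\<close>, the Leibniz rule makes
  \<open>d c\<^sub>m\<^sub>+\<^sub>1\<close> a sum over \<open>i \<le> m\<close> of two words each: one from \<open>c\<^sub>m d\<xi>\<^sub>m\<^sub>+\<^sub>1 = c\<^sub>m a b\<^sub>m\<^sub>+\<^sub>1\<close>, one
  from \<open>d\<xi>\<^sub>i = a b\<^sub>i\<close> inside \<open>d(\<xi>\<^sub>1\<^sub>\<dots>\<^sub>m)\<close>. Since \<open>|a|\<close> is even, \<open>a\<close> commutes with all homogeneous
  elements, so both words equal \<open>\<xi>\<^sub>1\<cdots>\<xi>\<^sub>i\<^sub>-\<^sub>1 a b\<^sub>i \<xi>\<^sub>i\<^sub>+\<^sub>1\<cdots>\<xi>\<^sub>m b\<^sub>m\<^sub>+\<^sub>1\<close> up to sign, and the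
  signs differ by \<open>(-1)\<^bsup>|b\<^sub>i| + |\<xi>\<^sub>i|\<^esup> = -1\<close>: whenever \<open>a b\<^sub>i \<noteq> 0\<close> its degree is both
  \<open>|a| + |b\<^sub>i|\<close> and \<open>|\<xi>\<^sub>i| + 1\<close>.\<close>

definition parity_sign :: "int \<Rightarrow> real" where
  "parity_sign k = (if even k then 1 else -1)"

lemma powi_minus_one_eq_parity_sign: "(-1::real) powi k = parity_sign k"
  by (simp add: power_int_minus_left parity_sign_def)

lemma parity_sign_add: "parity_sign (k + l) = parity_sign k * parity_sign l"
  by (auto simp: parity_sign_def)

lemma parity_sign_zero [simp]: "parity_sign 0 = 1"
  by (simp add: parity_sign_def)

lemma parity_sign_square [simp]: "parity_sign k * parity_sign k = 1"
  by (simp add: parity_sign_def)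

lemma prod_list_dga_bar:
  "prod_list (map (\<lambda>j. dga_bar (k j) (f j)) js) =
     parity_sign (sum_list (map k js)) *\<^sub>R (prod_list (map f js) :: 'a::real_algebra_1)"
  by (induction js) (simp_all add: dga_bar_def powi_minus_one_eq_parity_sign parity_sign_add)

locale dga =
  fixes G :: "int \<Rightarrow> 'a::real_algebra_1 set" and d :: "'a \<Rightarrow> 'a"
  assumes is_DGA: "is_DGA G d"
begin

lemma grade_scaleR: "x \<in> G k \<Longrightarrow> r *\<^sub>R x \<in> G k"
  using is_DGA unfolding is_DGA_def by metis

lemma grade_sum_eq_zero:
  assumes "finite S" and "\<And>k. k \<in> S \<Longrightarrow> f k \<in> G k" and "sum f S = 0" and "k \<in> S"
  shows "f k = 0"
proof -
  have "\<forall>S f. finite S \<longrightarrow> (\<forall>k\<in>S. f k \<in> G k) \<longrightarrow> sum f S = 0 \<longrightarrow> (\<forall>k\<in>S. f k = 0)"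
    using is_DGA unfolding is_DGA_def by (elim conjE)
  with assms show ?thesis
    by blast
qed

lemma grade_one: "1 \<in> G 0"
  using is_DGA unfolding is_DGA_def by metis

lemma grade_mult: "x \<in> G i \<Longrightarrow> y \<in> G j \<Longrightarrow> x * y \<in> G (i + j)"
  using is_DGA unfolding is_DGA_def by metis

lemma graded_commute: "x \<in> G i \<Longrightarrow> y \<in> G j \<Longrightarrow> x * y = parity_sign (i * j) *\<^sub>R (y * x)"
  using is_DGA unfolding is_DGA_def powi_minus_one_eq_parity_sign by metis

lemma d_add: "d (x + y) = d x + d y"
  using is_DGA unfolding is_DGA_def by metis

lemma d_scaleR: "d (r *\<^sub>R x) = r *\<^sub>R d x"
  using is_DGA unfolding is_DGA_def by metis

lemma d_grade: "x \<in> G k \<Longrightarrow> d x \<in> G (k + 1)"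
  using is_DGA unfolding is_DGA_def by metis

lemma d_mult: "x \<in> G i \<Longrightarrow> d (x * y) = d x * y + parity_sign i *\<^sub>R (x * d y)"
  using is_DGA unfolding is_DGA_def powi_minus_one_eq_parity_sign by metis

lemma d_zero: "d 0 = 0"
  using d_add[of 0 0] by simp

lemma d_sum: "d (sum f A) = (\<Sum>x\<in>A. d (f x))"
  by (induction A rule: infinite_finite_induct) (simp_all add: d_zero d_add)

lemma d_one: "d 1 = 0"
proof -
  have "d 1 = d 1 + d 1"
    using d_mult[OF grade_one, of 1] by simp
  then show ?thesis
    by simp
qed

lemma grade_unique:
  assumes "x \<in> G i" and "x \<in> G j" and "x \<noteq> 0"
  shows "i = j"
proof (rule ccontr)
  assume "i \<noteq> j"
  define f where "f k = (if k = i then x else - x)" for k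
  have "- x \<in> G j"
    using grade_scaleR[OF assms(2), of "-1"] by simp
  with \<open>i \<noteq> j\<close> assms(1) have "f k \<in> G k" if "k \<in> {i, j}" for k
    using that by (auto simp: f_def)
  moreover have "sum f {i, j} = 0"
    using \<open>i \<noteq> j\<close> by (simp add: f_def)
  ultimately have "f i = 0"
    using grade_sum_eq_zero[of "{i, j}" f i] by blast
  with assms(3) show False
    by (simp add: f_def)
qed

lemma even_grade_commute:
  assumes "x \<in> G i" and "even i" and "y \<in> G j"
  shows "x * y = y * x"
  using graded_commute[OF assms(1,3)] assms(2) by (simp add: parity_sign_def)

lemma prod_list_upt_grade:
  assumes "\<And>t. l \<le> t \<Longrightarrow> t < m \<Longrightarrow> f t \<in> G (k t)"
  shows "prod_list (map f [l..<m]) \<in> G (\<Sum>t\<in>{l..<m}. k t)"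
  using assms
proof (induction m)
  case (Suc m)
  then show ?case
    by (cases "l \<le> m") (simp_all add: grade_mult grade_one)
qed (simp add: grade_one)

lemma d_prod_list_upt:
  assumes "\<And>t. l \<le> t \<Longrightarrow> t < m \<Longrightarrow> f t \<in> G (k t)"
  shows "d (prod_list (map f [l..<m])) =
    (\<Sum>j\<in>{l..<m}. parity_sign (\<Sum>t\<in>{l..<j}. k t) *\<^sub>R
       (prod_list (map f [l..<j]) * d (f j) * prod_list (map f [Suc j..<m])))"
  using assms
proof (induction m)
  case (Suc m)
  show ?case
  proof (cases "l \<le> m")
    case True
    have "d (prod_list (map f [l..<Suc m])) = d (prod_list (map f [l..<m]) * f m)"
      using True by simp
    also have "\<dots> = d (prod_list (map f [l..<m])) * f m +
        parity_sign (\<Sum>t\<in>{l..<m}. k t) *\<^sub>R (prod_list (map f [l..<m]) * d (f m))"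
      using Suc.prems by (intro d_mult prod_list_upt_grade) simp
    also have "d (prod_list (map f [l..<m])) * f m =
        (\<Sum>j\<in>{l..<m}. parity_sign (\<Sum>t\<in>{l..<j}. k t) *\<^sub>R
           (prod_list (map f [l..<j]) * d (f j) * prod_list (map f [Suc j..<Suc m])))"
      using Suc by (simp add: sum_distrib_right mult.assoc)
    finally show ?thesis
      using True by simp
  qed (simp add: d_one)
qed (simp add: d_one)

end

locale primitives_of_products = dga G d
  for G :: "int \<Rightarrow> 'a::real_algebra_1 set" and d :: "'a \<Rightarrow> 'a" +
  fixes a :: 'a and ka :: int and b :: "nat \<Rightarrow> 'a" and kb :: "nat \<Rightarrow> int"
    and xi :: "nat \<Rightarrow> 'a" and kxi :: "nat \<Rightarrow> int" and n :: nat
  assumes a_grade: "a \<in> G ka" and even_ka: "even ka"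
    and b_grade: "\<And>i. 1 \<le> i \<Longrightarrow> i \<le> n \<Longrightarrow> b i \<in> G (kb i)"
    and d_b: "\<And>i. 1 \<le> i \<Longrightarrow> i \<le> n \<Longrightarrow> d (b i) = 0"
    and xi_grade: "\<And>i. 1 \<le> i \<Longrightarrow> i \<le> n \<Longrightarrow> xi i \<in> G (kxi i)"
    and d_xi: "\<And>i. 1 \<le> i \<Longrightarrow> i \<le> n \<Longrightarrow> d (xi i) = a * b i"
begin

definition xi_prod :: "nat \<Rightarrow> nat \<Rightarrow> 'a" where
  "xi_prod l m = prod_list (map xi [l..<m])"

definition xi_degree :: "nat \<Rightarrow> nat \<Rightarrow> int" where
  "xi_degree l m = (\<Sum>t\<in>{l..<m}. kxi t)"

definition c_term :: "nat \<Rightarrow> nat \<Rightarrow> 'a" where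
  "c_term m i = parity_sign (xi_degree 1 i) *\<^sub>R (xi_prod 1 i * b i * xi_prod (Suc i) (Suc m))"

definition c :: "nat \<Rightarrow> 'a" where
  "c m = (\<Sum>i = 1..m. c_term m i)"

lemma xi_prod_grade: "1 \<le> l \<Longrightarrow> m \<le> Suc n \<Longrightarrow> xi_prod l m \<in> G (xi_degree l m)"
  unfolding xi_prod_def xi_degree_def by (intro prod_list_upt_grade xi_grade) auto

lemma d_xi_prod:
  "1 \<le> l \<Longrightarrow> m \<le> Suc n \<Longrightarrow>
   d (xi_prod l m) = (\<Sum>j\<in>{l..<m}. parity_sign (xi_degree l j) *\<^sub>R
                       (xi_prod l j * (a * b j) * xi_prod (Suc j) m))"
  unfolding xi_prod_def xi_degree_def
  by (subst d_prod_list_upt[where k = kxi]) (auto intro: xi_grade intro!: sum.cong simp: d_xi)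

lemma xi_degree_split:
  "l \<le> i \<Longrightarrow> i < m \<Longrightarrow> xi_degree l m = xi_degree l i + kxi i + xi_degree (Suc i) m"
  unfolding xi_degree_def
  by (metis add.assoc le_less_trans less_imp_le sum.atLeastLessThan_concat sum.atLeast_Suc_lessThan)

lemma a_commute: "x \<in> G k \<Longrightarrow> a * x = x * a"
  using even_grade_commute[OF a_grade even_ka] .

lemma parity_signs_cancel_on_a_b:
  assumes "1 \<le> i" and "i \<le> n"
  shows "(parity_sign (kxi i) + parity_sign (kb i)) *\<^sub>R (a * b i) = 0"
proof (cases "a * b i = 0")
  case False
  have "a * b i \<in> G (ka + kb i)"
    using grade_mult[OF a_grade b_grade[OF assms]] .
  moreover have "a * b i \<in> G (kxi i + 1)"
    using d_grade[OF xi_grade[OF assms]] d_xi[OF assms] by simp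
  ultimately have "kxi i + 1 = ka + kb i"
    using grade_unique False by blast
  with even_ka have "odd (kxi i + kb i)"
    by presburger
  then show ?thesis
    by (auto simp: parity_sign_def)
qed simp

lemma xi_prod_Suc: "l \<le> m \<Longrightarrow> xi_prod l (Suc m) = xi_prod l m * xi m"
  by (simp add: xi_prod_def)

lemma xi_prod_empty: "m \<le> l \<Longrightarrow> xi_prod l m = 1"
  by (simp add: xi_prod_def)

lemma c_Suc:
  "c (Suc m) = c m * xi (Suc m) +
     parity_sign (xi_degree 1 (Suc m)) *\<^sub>R (xi_prod 1 (Suc m) * b (Suc m))"
proof -
  have "c_term (Suc m) i = c_term m i * xi (Suc m)" if "i \<in> {1..m}" for i
    using that by (simp add: c_term_def xi_prod_Suc mult.assoc)
  then have "(\<Sum>i = 1..m. c_term (Suc m) i) = c m * xi (Suc m)"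
    by (simp add: c_def sum_distrib_right)
  then show ?thesis
    by (simp add: c_def c_term_def xi_prod_empty)
qed

lemma c_term_grade:
  "1 \<le> i \<Longrightarrow> i \<le> m \<Longrightarrow> m \<le> n \<Longrightarrow>
   c_term m i \<in> G (xi_degree 1 i + kb i + xi_degree (Suc i) (Suc m))"
  unfolding c_term_def by (intro grade_mult grade_scaleR xi_prod_grade b_grade) auto

lemma c_term_times_a:
  assumes "1 \<le> i" and "i \<le> m" and "m \<le> n"
  shows "c_term m i * (a * y) =
    parity_sign (xi_degree 1 i) *\<^sub>R (xi_prod 1 i * (a * b i) * xi_prod (Suc i) (Suc m) * y)"
proof -
  have "xi_prod (Suc i) (Suc m) * (a * z) = a * (xi_prod (Suc i) (Suc m) * z)" for z
    using a_commute[OF xi_prod_grade] assms by (simp flip: mult.assoc)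
  moreover have "b i * (a * z) = a * (b i * z)" for z
    using a_commute[OF b_grade] assms by (simp flip: mult.assoc)
  ultimately show ?thesis
    by (simp add: c_term_def mult.assoc)
qed

lemma d_c_times_xi:
  assumes "m < n"
  shows "d (c m * xi (Suc m)) = d (c m) * xi (Suc m) +
    (\<Sum>i = 1..m. parity_sign (xi_degree 1 i + kb i + xi_degree (Suc i) (Suc m)) *\<^sub>R
                   (c_term m i * (a * b (Suc m))))"
proof -
  have "d (c_term m i * xi (Suc m)) = d (c_term m i) * xi (Suc m) +
      parity_sign (xi_degree 1 i + kb i + xi_degree (Suc i) (Suc m)) *\<^sub>R
        (c_term m i * (a * b (Suc m)))" if "i \<in> {1..m}" for i
    using that assms d_mult[OF c_term_grade] d_xi[of "Suc m"] by simp
  then show ?thesis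
    by (simp add: c_def sum_distrib_right d_sum sum.distrib)
qed

lemma d_last_summand:
  assumes "m < n"
  shows "d (parity_sign (xi_degree 1 (Suc m)) *\<^sub>R (xi_prod 1 (Suc m) * b (Suc m))) =
    (\<Sum>i = 1..m. (parity_sign (xi_degree 1 (Suc m)) * parity_sign (xi_degree 1 i)) *\<^sub>R
       (xi_prod 1 i * (a * b i) * xi_prod (Suc i) (Suc m) * b (Suc m)))"
proof -
  have "d (xi_prod 1 (Suc m) * b (Suc m)) = d (xi_prod 1 (Suc m)) * b (Suc m)"
    using assms d_mult[OF xi_prod_grade] d_b[of "Suc m"] by simp
  also have "\<dots> = (\<Sum>i\<in>{1..<Suc m}. parity_sign (xi_degree 1 i) *\<^sub>R
                 (xi_prod 1 i * (a * b i) * xi_prod (Suc i) (Suc m) * b (Suc m)))"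
    using assms by (simp only: d_xi_prod sum_distrib_right scaleR_left_distrib) simp
  finally show ?thesis
    by (simp only: d_scaleR atLeastLessThanSuc_atLeastAtMost scaleR_sum_right scaleR_scaleR)
qed

lemma c_closed: "m \<le> n \<Longrightarrow> d (c m) = 0"
proof (induction m)
  case (Suc m)
  let ?Z = "\<lambda>i. xi_prod 1 i * (a * b i) * xi_prod (Suc i) (Suc m) * b (Suc m)"
  have "m < n" and "d (c m) = 0"
    using Suc by simp_all
  have cancel: "parity_sign (xi_degree 1 i + kb i + xi_degree (Suc i) (Suc m)) *\<^sub>R
          (c_term m i * (a * b (Suc m))) +
        (parity_sign (xi_degree 1 (Suc m)) * parity_sign (xi_degree 1 i)) *\<^sub>R ?Z i = 0"
    if i: "i \<in> {1..m}" for i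
  proof -
    let ?s = "parity_sign (xi_degree (Suc i) (Suc m))"
    have "xi_prod 1 i * ((parity_sign (kxi i) + parity_sign (kb i)) *\<^sub>R (a * b i)) *
            xi_prod (Suc i) (Suc m) * b (Suc m) = 0"
      using i \<open>m < n\<close> by (simp add: parity_signs_cancel_on_a_b)
    then have "?s *\<^sub>R ((parity_sign (kxi i) + parity_sign (kb i)) *\<^sub>R ?Z i) = 0"
      by simp
    moreover have "parity_sign (xi_degree 1 i + kb i + xi_degree (Suc i) (Suc m)) *
        parity_sign (xi_degree 1 i) = parity_sign (kb i) * ?s"
      by (simp add: parity_sign_add)
    moreover have "parity_sign (xi_degree 1 (Suc m)) * parity_sign (xi_degree 1 i) =
        parity_sign (kxi i) * ?s"
      using i xi_degree_split[of 1 i "Suc m"] by (simp add: parity_sign_add)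
    ultimately show ?thesis
      using i \<open>m < n\<close> by (simp add: c_term_times_a algebra_simps)
  qed
  have "d (c (Suc m)) = d (c m * xi (Suc m)) +
      d (parity_sign (xi_degree 1 (Suc m)) *\<^sub>R (xi_prod 1 (Suc m) * b (Suc m)))"
    by (simp only: c_Suc d_add)
  also have "\<dots> = (\<Sum>i = 1..m.
      parity_sign (xi_degree 1 i + kb i + xi_degree (Suc i) (Suc m)) *\<^sub>R
        (c_term m i * (a * b (Suc m))) +
      (parity_sign (xi_degree 1 (Suc m)) * parity_sign (xi_degree 1 i)) *\<^sub>R ?Z i)"
    unfolding d_c_times_xi[OF \<open>m < n\<close>] d_last_summand[OF \<open>m < n\<close>] \<open>d (c m) = 0\<close>
    by (simp add: sum.distrib)
  also have "\<dots> = 0"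
    using cancel by simp
  finally show ?case .
qed (simp add: c_def d_zero)

lemma c_eq_sum_prod_list:
  "c n = (\<Sum>i = 1..n. prod_list (map (\<lambda>j. if j < i then dga_bar (kxi j) (xi j)
                                           else if j = i then b i else xi j) [1..<Suc n]))"
  unfolding c_def
proof (rule sum.cong)
  fix i assume "i \<in> {1..n}"
  then have split: "[1..<Suc n] = [1..<i] @ i # [Suc i..<Suc n]"
    using upt_add_eq_append[of 1 i "Suc n - i"] by (simp add: upt_conv_Cons)
  have before: "map (\<lambda>j. if j < i then dga_bar (kxi j) (xi j) else if j = i then b i else xi j)
      [1..<i] = map (\<lambda>j. dga_bar (kxi j) (xi j)) [1..<i]"
    by (rule map_cong) auto
  have after: "map (\<lambda>j. if j < i then dga_bar (kxi j) (xi j) else if j = i then b i else xi j)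
      [Suc i..<Suc n] = map xi [Suc i..<Suc n]"
    by (rule map_cong) auto
  show "c_term n i = prod_list (map (\<lambda>j. if j < i then dga_bar (kxi j) (xi j)
                                   else if j = i then b i else xi j) [1..<Suc n])"
    unfolding split map_append list.map before after prod_list.append prod_list.Cons
    by (simp add: c_term_def xi_prod_def xi_degree_def prod_list_dga_bar
        interv_sum_list_conv_sum_set_nat mult.assoc)
qed simp

end

theorem proposition2p2:
  fixes G :: "int \<Rightarrow> 'a::real_algebra_1 set" and d :: "'a \<Rightarrow> 'a"
    and a :: 'a and b xi :: "nat \<Rightarrow> 'a" and n :: nat
    and ka :: int and kb kxi :: "nat \<Rightarrow> int"
  assumes "is_DGA G d"
    and "a \<in> G ka" and "even ka" and "d a = 0"
    and "\<forall>i\<in>{1..n}. b i \<in> G (kb i) \<and> d (b i) = 0"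
    and "\<forall>i\<in>{1..n}. \<exists>y. d y = a * b i"
    and "\<forall>i\<in>{1..n}. xi i \<in> G (kxi i) \<and> d (xi i) = a * b i"
  shows "d (\<Sum>i = 1..n. prod_list (map (\<lambda>j. if j < i then dga_bar (kxi j) (xi j)
                                             else if j = i then b i else xi j) [1..<Suc n])) = 0"
proof -
  interpret primitives_of_products G d a ka b kb xi kxi n
    using assms by unfold_locales auto
  show ?thesis
    unfolding c_eq_sum_prod_list[symmetric] using c_closed by simp
qed

end
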